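(* Let $A$ be a finite set of options containing a default option $0$, and consider $V\ge1$ votes, each a truncated ranking with possible ties, interpreted as in the context, with Llull matrix $v$. Let $W$ be the set of path-revised approval choices of $v$. If $x,y\in A$, $x$ dominates $y$ in the sense of Pareto, and $y\in W$, then $x\in W$.
   Context: A truncated ranking with ties is a weak order on a subset of $A$ (the ranked options); for ranked options, $x$ is preferred to $y$ if strictly above, and ranked equally if tied; every ranked option is preferred to every unranked option; two unranked options are not compared. Llull matrix: $v_{xy}=(\#\{\text{votes preferring }x\text{ to }y\}+\tfrac12\#\{\text{votes ranking }x,y\text{ equally}\})/V$. Path scores: $v^*_{xy}=\max\min(v_{x_0x_1},\dots,v_{x_{m-1}x_m})$ over all paths $x_0\dots x_m$ ($m\ge1$, $x_0=x$, $x_m=y$, $x_i$ pairwise distinct). For $z\in A$, $D(z)=v^*_{z0}-v^*_{0z}$ if $z\ne0$ and $D(0)=0$; $x$ is a path-revised approval choice if $D(x)\ge D(z)$ for all $z\ne x$. $x$ dominates $y$ in the sense of Pareto if every vote either prefers $x$ to $y$ or ranks them equally, and at least one vote prefers $x$ to $y$. *)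

theory Defs
  imports Complex_Main
begin

text \<open>A ballot is a pair (R, r): R is the set of ranked options and r is a weak order
  on R, where (x, y) \<in> r means that x is ranked at least as high as y.\<close>

type_synonym 'a ballot = "'a set \<times> ('a \<times> 'a) set"

definition weak_order_on :: "'a set \<Rightarrow> ('a \<times> 'a) set \<Rightarrow> bool" where
  "weak_order_on R r \<longleftrightarrow> r \<subseteq> R \<times> R \<and> refl_on R r \<and> trans r \<and> total_on R r"

definition truncated_ranking :: "'a set \<Rightarrow> 'a ballot \<Rightarrow> bool" where
  "truncated_ranking A b \<longleftrightarrow> fst b \<subseteq> A \<and> weak_order_on (fst b) (snd b)"

definition prefers :: "'a ballot \<Rightarrow> 'a \<Rightarrow> 'a \<Rightarrow> bool" where
  "prefers b x y \<longleftrightarrow>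
     (x \<in> fst b \<and> y \<in> fst b \<and> (x, y) \<in> snd b \<and> (y, x) \<notin> snd b)
     \<or> (x \<in> fst b \<and> y \<notin> fst b)"

definition ranks_equal :: "'a ballot \<Rightarrow> 'a \<Rightarrow> 'a \<Rightarrow> bool" where
  "ranks_equal b x y \<longleftrightarrow> x \<in> fst b \<and> y \<in> fst b \<and> (x, y) \<in> snd b \<and> (y, x) \<in> snd b"

definition llull :: "'a ballot list \<Rightarrow> 'a \<Rightarrow> 'a \<Rightarrow> real" where
  "llull vs x y =
     (real (length (filter (\<lambda>b. prefers b x y) vs))
      + real (length (filter (\<lambda>b. ranks_equal b x y) vs)) / 2) / real (length vs)"

definition is_path :: "'a set \<Rightarrow> 'a \<Rightarrow> 'a \<Rightarrow> 'a list \<Rightarrow> bool" where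
  "is_path A x y p \<longleftrightarrow> length p \<ge> 2 \<and> distinct p \<and> set p \<subseteq> A \<and> hd p = x \<and> last p = y"

definition path_strength :: "('a \<Rightarrow> 'a \<Rightarrow> real) \<Rightarrow> 'a list \<Rightarrow> real" where
  "path_strength v p = Min (set (map (\<lambda>(a, b). v a b) (zip p (tl p))))"

definition path_score :: "'a set \<Rightarrow> ('a \<Rightarrow> 'a \<Rightarrow> real) \<Rightarrow> 'a \<Rightarrow> 'a \<Rightarrow> real" where
  "path_score A v x y = Max {path_strength v p | p. is_path A x y p}"

definition Dscore :: "'a set \<Rightarrow> 'a \<Rightarrow> ('a \<Rightarrow> 'a \<Rightarrow> real) \<Rightarrow> 'a \<Rightarrow> real" where
  "Dscore A d v z = (if z = d then 0 else path_score A v z d - path_score A v d z)"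

text \<open>Path-revised approval choices (d is the default option 0).\<close>
definition path_revised_approval :: "'a set \<Rightarrow> 'a \<Rightarrow> ('a \<Rightarrow> 'a \<Rightarrow> real) \<Rightarrow> 'a set" where
  "path_revised_approval A d v =
     {x \<in> A. \<forall>z \<in> A. z \<noteq> x \<longrightarrow> Dscore A d v x \<ge> Dscore A d v z}"

definition pareto_dominates :: "'a ballot list \<Rightarrow> 'a \<Rightarrow> 'a \<Rightarrow> bool" where
  "pareto_dominates vs x y \<longleftrightarrow>
     (\<forall>b \<in> set vs. prefers b x y \<or> ranks_equal b x y) \<and> (\<exists>b \<in> set vs. prefers b x y)"

end

theory Submission
  imports Defs
begin

text \<open>If x Pareto-dominates y, every vote gives x at least the support of y against any third
  option z, concedes to z against x at most what it concedes against y, and favours x over y at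
  least as much as y over x; these inequalities pass to the Llull matrix.  A path starting at y
  can then be rerouted to start at x without losing strength (cut it at x if it passes through x,
  otherwise replace y by x), dually for paths ending at x, and a path from y to x becomes one
  from x to y.  Hence x has at least the path-revised approval score of y.\<close>

lemma successively_zip_tl:
  "(\<forall>(a, b) \<in> set (zip p (tl p)). P a b) \<longleftrightarrow> successively P p"
  by (induction p rule: induct_list012) auto

lemma path_strength_ge_iff:
  assumes "length p \<ge> 2"
  shows "c \<le> path_strength v p \<longleftrightarrow> successively (\<lambda>a b. c \<le> v a b) p"
proof -
  have "zip p (tl p) \<noteq> []"
    using assms by (cases p; cases "tl p") auto
  then show ?thesis
    unfolding path_strength_def by (simp add: Min_ge_iff split_beta successively_zip_tl [symmetric])
qed

lemma finite_paths:
  assumes "finite A"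
  shows "finite {p. is_path A a b p}"
proof -
  have "{p. is_path A a b p} \<subseteq> {xs. set xs \<subseteq> A \<and> length xs \<le> card A}"
  proof clarify
    fix p assume "is_path A a b p"
    then have "distinct p" "set p \<subseteq> A"
      by (simp_all add: is_path_def)
    then show "set p \<subseteq> A \<and> length p \<le> card A"
      using card_mono [OF assms] distinct_card by metis
  qed
  then show ?thesis
    using finite_lists_length_le [OF assms] finite_subset by blast
qed

lemma is_path_rev: "is_path A a b p \<Longrightarrow> is_path A b a (rev p)"
  by (auto simp: is_path_def hd_rev last_rev)

lemma path_score_mono:
  assumes "finite A" "a \<in> A" "b \<in> A" "a \<noteq> b"
    and reroute: "\<And>c p. is_path A a b p \<Longrightarrow> successively (\<lambda>u w. c \<le> v u w) p \<Longrightarrow>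
      \<exists>q. is_path A a' b' q \<and> successively (\<lambda>u w. c \<le> v u w) q"
  shows "path_score A v a b \<le> path_score A v a' b'"
proof -
  have "is_path A a b [a, b]"
    using assms by (simp add: is_path_def)
  then have nonempty: "{path_strength v p | p. is_path A a b p} \<noteq> {}"
    by blast
  have "path_strength v p \<le> path_score A v a' b'" if p: "is_path A a b p" for p
  proof -
    have "length p \<ge> 2"
      using p by (simp add: is_path_def)
    then obtain q where q: "is_path A a' b' q"
      and "successively (\<lambda>u w. path_strength v p \<le> v u w) q"
      using reroute [OF p] path_strength_ge_iff by blast
    then have "path_strength v p \<le> path_strength v q"
      by (simp add: path_strength_ge_iff is_path_def)
    also have "\<dots> \<le> path_score A v a' b'"
      unfolding path_score_def using q finite_paths [OF assms(1)]
      by (intro Max_ge) (auto simp: Setcompr_eq_image)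
    finally show ?thesis .
  qed
  then show ?thesis
    unfolding path_score_def using finite_paths [OF assms(1)] nonempty
    by (subst Max_le_iff) (auto simp: Setcompr_eq_image)
qed

lemma reroute_path_start:
  assumes R: "\<And>z. z \<noteq> x \<Longrightarrow> z \<noteq> y \<Longrightarrow> R y z \<Longrightarrow> R x z"
    and "x \<in> A" "t \<noteq> x" "t \<noteq> y"
    and p: "is_path A y t p" "successively R p"
  shows "\<exists>q. is_path A x t q \<and> successively R q"
proof (cases "x \<in> set p")
  case True
  then obtain ys zs where p_eq: "p = ys @ x # zs"
    by (meson split_list)
  then have "zs \<noteq> []"
    using p \<open>t \<noteq> x\<close> by (auto simp: is_path_def)
  then show ?thesis
    using p p_eq
    by (intro exI [of _ "x # zs"]) (auto simp: is_path_def successively_append_iff Suc_le_eq)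
next
  case False
  obtain r where p_eq: "p = y # r" "r \<noteq> []"
    using p by (cases p) (auto simp: is_path_def Suc_le_eq)
  have "hd r \<noteq> x" "hd r \<noteq> y"
    using False p p_eq by (auto simp: is_path_def)
  then show ?thesis
    using p p_eq False \<open>x \<in> A\<close> R
    by (intro exI [of _ "x # r"]) (auto simp: is_path_def successively_Cons)
qed

lemma reroute_path_end:
  assumes "\<And>z. z \<noteq> x \<Longrightarrow> z \<noteq> y \<Longrightarrow> R z x \<Longrightarrow> R z y"
    and "y \<in> A" "t \<noteq> x" "t \<noteq> y"
    and "is_path A t x p" "successively R p"
  shows "\<exists>q. is_path A t y q \<and> successively R q"
proof -
  have "is_path A x t (rev p)" "successively (\<lambda>a b. R b a) (rev p)"
    using assms(5,6) by (simp_all add: is_path_rev)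
  then obtain q where "is_path A y t q" "successively (\<lambda>a b. R b a) q"
    using reroute_path_start [of y x "\<lambda>a b. R b a" A t "rev p"] assms(1-4) by blast
  then show ?thesis
    by (intro exI [of _ "rev q"]) (simp add: is_path_rev)
qed

lemma reroute_path_swap:
  assumes R1: "\<And>z. z \<noteq> x \<Longrightarrow> z \<noteq> y \<Longrightarrow> R y z \<Longrightarrow> R x z"
    and R2: "\<And>z. z \<noteq> x \<Longrightarrow> z \<noteq> y \<Longrightarrow> R z x \<Longrightarrow> R z y"
    and R3: "R y x \<Longrightarrow> R x y"
    and p: "is_path A y x p" "successively R p"
  shows "\<exists>q. is_path A x y q \<and> successively R q"
proof -
  obtain m where p_eq: "p = y # m @ [x]"
    using p by (cases p rule: rev_cases; cases "butlast p") (auto simp: is_path_def)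
  have "successively R (x # m @ [y])"
  proof (cases "m = []")
    case True
    then show ?thesis using p p_eq R3 by auto
  next
    case False
    then have "hd m \<noteq> x" "hd m \<noteq> y" "last m \<noteq> x" "last m \<noteq> y"
      using p p_eq by (auto simp: is_path_def)
    then show ?thesis
      using p p_eq False R1 R2 by (auto simp: successively_append_iff successively_Cons)
  qed
  moreover have "is_path A x y (x # m @ [y])"
    using p p_eq by (auto simp: is_path_def)
  ultimately show ?thesis by blast
qed

definition matrix_dominates :: "('a \<Rightarrow> 'a \<Rightarrow> real) \<Rightarrow> 'a \<Rightarrow> 'a \<Rightarrow> bool" where
  "matrix_dominates v x y \<longleftrightarrow>
     (\<forall>z. z \<noteq> x \<longrightarrow> z \<noteq> y \<longrightarrow> v y z \<le> v x z \<and> v z x \<le> v z y) \<and> v y x \<le> v x y"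

lemma matrix_dominates_thresholds:
  assumes "matrix_dominates v x y"
  shows "\<And>z. z \<noteq> x \<Longrightarrow> z \<noteq> y \<Longrightarrow> c \<le> v y z \<Longrightarrow> c \<le> v x z"
    and "\<And>z. z \<noteq> x \<Longrightarrow> z \<noteq> y \<Longrightarrow> c \<le> v z x \<Longrightarrow> c \<le> v z y"
    and "c \<le> v y x \<Longrightarrow> c \<le> v x y"
  using assms unfolding matrix_dominates_def by (meson order_trans)+

lemma Dscore_mono:
  assumes dom: "matrix_dominates v x y" and "finite A" "d \<in> A" "x \<in> A" "y \<in> A" "x \<noteq> y"
  shows "Dscore A d v y \<le> Dscore A d v x"
proof -
  note thresholds = matrix_dominates_thresholds [OF dom]
  have swap: "path_score A v y x \<le> path_score A v x y"
    using assms by (intro path_score_mono reroute_path_swap thresholds) auto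
  show ?thesis
  proof (cases "x = d \<or> y = d")
    case True
    then show ?thesis
      using swap \<open>x \<noteq> y\<close> by (auto simp: Dscore_def)
  next
    case False
    have "path_score A v y d \<le> path_score A v x d"
      using assms False by (intro path_score_mono reroute_path_start thresholds) auto
    moreover have "path_score A v d x \<le> path_score A v d y"
      using assms False by (intro path_score_mono reroute_path_end thresholds) auto
    ultimately show ?thesis
      using False by (simp add: Dscore_def)
  qed
qed

lemma path_revised_approval_upward_closed:
  assumes "matrix_dominates v x y" "finite A" "d \<in> A" "x \<in> A"
    and "y \<in> path_revised_approval A d v"
  shows "x \<in> path_revised_approval A d v"
proof (cases "x = y")
  case False
  then have "Dscore A d v y \<le> Dscore A d v x"
    using assms by (intro Dscore_mono) (auto simp: path_revised_approval_def)
  then show ?thesis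
    using assms by (force simp: path_revised_approval_def)
qed (use assms in simp)

definition vote_weight :: "'a ballot \<Rightarrow> 'a \<Rightarrow> 'a \<Rightarrow> real" where
  "vote_weight b a c = (if prefers b a c then 1 else 0) + (if ranks_equal b a c then 1/2 else 0)"

lemma llull_eq_sum_vote_weight:
  "llull vs a c = (\<Sum>b \<leftarrow> vs. vote_weight b a c) / real (length vs)"
proof -
  have counts: "real (length (filter P bs)) + real (length (filter Q bs)) / 2
        = (\<Sum>b \<leftarrow> bs. (if P b then 1 else 0) + (if Q b then 1/2 else 0))" for P Q bs
    by (induction bs) (auto simp: field_simps)
  show ?thesis
    unfolding llull_def vote_weight_def by (simp only: counts)
qed

lemma llull_mono:
  assumes "\<And>b. b \<in> set vs \<Longrightarrow> vote_weight b a c \<le> vote_weight b a' c'"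
  shows "llull vs a c \<le> llull vs a' c'"
  unfolding llull_eq_sum_vote_weight using assms
  by (intro divide_right_mono sum_list_mono) auto

lemma vote_weight_pair:
  "vote_weight (R, r) a c =
     (if a \<notin> R then 0 else if c \<notin> R then 1
      else if (a, c) \<notin> r then 0 else if (c, a) \<in> r then 1/2 else 1)"
  unfolding vote_weight_def prefers_def ranks_equal_def by auto

lemma vote_weight_dominates:
  assumes "truncated_ranking A b" and "prefers b x y \<or> ranks_equal b x y"
  shows "z \<noteq> x \<Longrightarrow> z \<noteq> y \<Longrightarrow> vote_weight b y z \<le> vote_weight b x z"
    and "z \<noteq> x \<Longrightarrow> z \<noteq> y \<Longrightarrow> vote_weight b z x \<le> vote_weight b z y"
    and "vote_weight b y x \<le> vote_weight b x y"
proof -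
  obtain R r where b: "b = (R, r)"
    by (cases b)
  have r_sub: "r \<subseteq> R \<times> R" and r_trans: "\<And>u w s. (u, w) \<in> r \<Longrightarrow> (w, s) \<in> r \<Longrightarrow> (u, s) \<in> r"
    using assms(1) unfolding b truncated_ranking_def weak_order_on_def by (auto dest: transD)
  have "x \<in> R" and xy: "y \<in> R \<Longrightarrow> (x, y) \<in> r"
    using assms(2) unfolding b prefers_def ranks_equal_def by auto
  show "z \<noteq> x \<Longrightarrow> z \<noteq> y \<Longrightarrow> vote_weight b y z \<le> vote_weight b x z"
    unfolding b vote_weight_pair using \<open>x \<in> R\<close> xy r_trans [of x y z] r_trans [of z x y] by auto
  show "z \<noteq> x \<Longrightarrow> z \<noteq> y \<Longrightarrow> vote_weight b z x \<le> vote_weight b z y"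
    unfolding b vote_weight_pair using \<open>x \<in> R\<close> xy r_trans [of z x y] r_trans [of x y z] r_sub
    by auto
  show "vote_weight b y x \<le> vote_weight b x y"
    unfolding b vote_weight_pair using \<open>x \<in> R\<close> xy by auto
qed

lemma pareto_dominates_matrix_dominates:
  assumes "\<forall>b \<in> set vs. truncated_ranking A b" "pareto_dominates vs x y"
  shows "matrix_dominates (llull vs) x y"
proof -
  have ballots: "truncated_ranking A b" "prefers b x y \<or> ranks_equal b x y" if "b \<in> set vs" for b
    using assms that by (auto simp: pareto_dominates_def)
  have "llull vs y z \<le> llull vs x z" "llull vs z x \<le> llull vs z y" if "z \<noteq> x" "z \<noteq> y" for z
    using vote_weight_dominates(1,2) [OF ballots] that by (metis llull_mono)+
  moreover have "llull vs y x \<le> llull vs x y"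
    using vote_weight_dominates(3) [OF ballots] by (metis llull_mono)
  ultimately show ?thesis
    unfolding matrix_dominates_def by blast
qed

theorem corollary4p3:
  fixes A :: "'a set" and d :: 'a and vs :: "'a ballot list" and x y :: 'a
  assumes "finite A" and "d \<in> A"
    and "length vs \<ge> 1"
    and "\<forall>b \<in> set vs. truncated_ranking A b"
    and "x \<in> A" and "y \<in> A"
    and "pareto_dominates vs x y"
    and "y \<in> path_revised_approval A d (llull vs)"
  shows "x \<in> path_revised_approval A d (llull vs)"
  \<comment> \<open>The hypothesis on the length of vs is implied by the Pareto dominance.\<close>
  using path_revised_approval_upward_closed
      [OF pareto_dominates_matrix_dominates [OF assms(4,7)] assms(1,2,5,8)] .

end
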